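(* For infinitely many positive integers $n$ there is a directed tree with $n$ vertices in which every directed path has length at most one (i.e. every vertex is a source or a sink) and whose span is greater than $\log_2 n/(2\log_2\log_2 n)$.
   Context: A directed tree is a DAG (directed acyclic graph) whose underlying undirected graph is a tree. A source (sink) is a vertex with no incoming (outgoing) edge. An upward-planar layered drawing of a DAG $G$ maps each vertex $v$ to a point in the plane whose y-coordinate $y(v)$ is an integer, and each edge $(u,v)$ (directed from tail $u$ to head $v$) to a strictly y-monotone curve going upward from $u$ to $v$ (so $y(u)<y(v)$), such that no two edges intersect except at common endpoints. The span of an edge $(u,v)$ in such a drawing $\Gamma$ is $y(v)-y(u)$; the span of $\Gamma$ is the maximum span of its edges; the span of an upward-planar DAG is the minimum span over all its upward-planar layered drawings. The length of a directed path is its number of edges. *)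

theory Defs
  imports "HOL-Analysis.Analysis"
begin

text \<open>It is a directed tree if its underlying undirected graph is a tree: no loops, no pair of
  antiparallel edges, connected, and with exactly |V| - 1 (undirected) edges.\<close>

definition directed_tree :: "'v set \<Rightarrow> ('v \<times> 'v) set \<Rightarrow> bool" where
  "directed_tree V E \<longleftrightarrow>
     finite V \<and> V \<noteq> {} \<and> E \<subseteq> V \<times> V \<and>
     (\<forall>(u,v)\<in>E. u \<noteq> v \<and> (v,u) \<notin> E) \<and>
     (\<forall>u\<in>V. \<forall>v\<in>V. (u,v) \<in> (E \<union> E\<inverse>)\<^sup>*) \<and>
     card E = card V - 1"

definition all_paths_short :: "('v \<times> 'v) set \<Rightarrow> bool" where
  "all_paths_short E \<longleftrightarrow> (\<forall>u v w. (u,v) \<in> E \<longrightarrow> (v,w) \<notin> E)"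

definition vpt :: "('v \<Rightarrow> real) \<Rightarrow> ('v \<Rightarrow> int) \<Rightarrow> 'v \<Rightarrow> real \<times> real" where
  "vpt x y v = (x v, real_of_int (y v))"

definition upward_planar_layered_drawing ::
  "'v set \<Rightarrow> ('v \<times> 'v) set \<Rightarrow> ('v \<Rightarrow> real) \<Rightarrow> ('v \<Rightarrow> int)
     \<Rightarrow> ('v \<times> 'v \<Rightarrow> real \<Rightarrow> real \<times> real) \<Rightarrow> bool" where
  "upward_planar_layered_drawing V E x y c \<longleftrightarrow>
     inj_on (vpt x y) V \<and>
     (\<forall>(u,v)\<in>E. path (c (u,v)) \<and> pathstart (c (u,v)) = vpt x y u \<and>
                 pathfinish (c (u,v)) = vpt x y v \<and>
                 strict_mono_on {0..1} (\<lambda>t. snd (c (u,v) t)) \<and>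
                 path_image (c (u,v)) \<inter> vpt x y ` V \<subseteq> {vpt x y u, vpt x y v}) \<and>
     (\<forall>e\<in>E. \<forall>e'\<in>E. e \<noteq> e' \<longrightarrow>
        path_image (c e) \<inter> path_image (c e') \<subseteq>
          vpt x y ` ({fst e, snd e} \<inter> {fst e', snd e'}))"

definition drawing_span :: "('v \<times> 'v) set \<Rightarrow> ('v \<Rightarrow> int) \<Rightarrow> nat" where
  "drawing_span E y = Max (insert 0 ((\<lambda>(u,v). nat (y v - y u)) ` E))"

definition upward_span :: "'v set \<Rightarrow> ('v \<times> 'v) set \<Rightarrow> nat" where
  "upward_span V E = (LEAST s. \<exists>x y c. upward_planar_layered_drawing V E x y c \<and>
                                     drawing_span E y = s)"

end

(*
  Let p be a source whose children all lie at most k levels above it.  Order 2k + 1 of its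
  children from left to right by their edges just above p.  As only k heights are available,
  some child b is a valley: on each side of b there is another child lying at least as high
  as b.  The edges from p to these two children enclose b, so every other edge into b starts
  above p.  Turning the drawing upside down, b is a source whose other children lie at most
  y b - y p - 1 levels away, and induction along a complete alternating tree of branching
  2k + 1 and depth k + 1 forces an edge of span greater than k.  Such a tree has between
  (2k + 1)^(k+1) and (2k + 1)^(k+2) vertices; laid out with nested edges and vertex v placed
  at (v^2, v), straight edges give an upward-planar drawing, and the span bound becomes
  log n / (2 log log n).
*)
theory Submission
  imports Defs
begin

lemma exists_valley:
  fixes lt :: "'a \<Rightarrow> 'a \<Rightarrow> bool" and h :: "'a \<Rightarrow> 'b::linorder"
  assumes "finite N" "\<forall>a\<in>N. \<forall>b\<in>N. a \<noteq> b \<longrightarrow> lt a b \<or> lt b a"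
    and "2 * card (h ` N) + 1 \<le> card N"
  shows "\<exists>a\<in>N. \<exists>x\<in>N. \<exists>c\<in>N. lt a x \<and> lt x c \<and> h x \<le> h a \<and> h x \<le> h c"
  using assms
proof (induction "card (h ` N)" arbitrary: N rule: less_induct)
  case less
  have "N \<noteq> {}" using less.prems(3) by auto
  define m where "m = Min (h ` N)"
  have m_in: "m \<in> h ` N" and m_le: "\<And>v. v \<in> N \<Longrightarrow> m \<le> h v"
    using \<open>finite N\<close> \<open>N \<noteq> {}\<close> unfolding m_def by auto
  define M where "M = {v\<in>N. h v = m}"
  show ?case
  proof (cases "\<exists>x\<in>M. (\<exists>a\<in>N. lt a x) \<and> (\<exists>c\<in>N. lt x c)")
    case True
    then show ?thesis using m_le unfolding M_def by fastforce
  next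
    case False
    \<comment> \<open>then each vertex of minimal height is a first or a last element, so there are at most two\<close>
    define F where "F = {x\<in>N. \<forall>a\<in>N. \<not> lt a x}"
    define G where "G = {x\<in>N. \<forall>c\<in>N. \<not> lt x c}"
    have "card F \<le> 1" "card G \<le> 1"
      using less.prems(1,2) unfolding F_def G_def by (auto simp: card_le_Suc0_iff_eq)
    moreover have "M \<subseteq> F \<union> G" using False unfolding M_def F_def G_def by auto
    then have "card M \<le> card F + card G"
      using less.prems(1) card_Un_le[of F G] card_mono[of "F \<union> G" M]
      unfolding F_def G_def by fastforce
    ultimately have "card M \<le> 2" by linarith
    define N' where "N' = N - M"
    have hN': "h ` N' = h ` N - {m}" unfolding N'_def M_def by auto
    have "card (h ` N') = card (h ` N) - 1"
      using m_in less.prems(1) unfolding hN' by simp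
    moreover have "card (h ` N) \<ge> 1"
      using m_in less.prems(1) by (auto simp: Suc_le_eq card_gt_0_iff)
    moreover have "card N' \<ge> card N - 2"
      using \<open>card M \<le> 2\<close> card_Diff_subset[of M N] less.prems(1) unfolding N'_def M_def by fastforce
    ultimately have "\<exists>a\<in>N'. \<exists>x\<in>N'. \<exists>c\<in>N'. lt a x \<and> lt x c \<and> h x \<le> h a \<and> h x \<le> h c"
      using less.prems by (intro less.hyps) (auto simp: N'_def)
    then show ?thesis unfolding N'_def by blast
  qed
qed

lemma continuous_functions_meet:
  fixes f g :: "real \<Rightarrow> real"
  assumes "continuous_on {a..b} f" "continuous_on {a..b} g" "a \<le> b"
    and "(f a - g a) * (f b - g b) \<le> 0"
  shows "\<exists>t\<in>{a..b}. f t = g t"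
proof -
  have cont: "continuous_on {a..b} (\<lambda>t. f t - g t)"
    using assms(1,2) by (intro continuous_intros)
  from assms(4) consider "f a - g a \<le> 0" "0 \<le> f b - g b" | "f b - g b \<le> 0" "0 \<le> f a - g a"
    by (auto simp: mult_le_0_iff)
  then show ?thesis
  proof cases
    case 1
    then show ?thesis using IVT'[OF 1 \<open>a \<le> b\<close> cont] by auto
  next
    case 2
    then show ?thesis using IVT2'[OF 2 \<open>a \<le> b\<close> cont] by auto
  qed
qed

text \<open>An upward drawing seen as a family of functions of the height: edge (u,v) is the graph
  of X u v over [y u, y v], running from the vertex point (x u, y u) to (x v, y v).\<close>
locale height_drawing =
  fixes E :: "('v \<times> 'v) set" and x :: "'v \<Rightarrow> real" and y :: "'v \<Rightarrow> int"
    and X :: "'v \<Rightarrow> 'v \<Rightarrow> real \<Rightarrow> real"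
  assumes edge_upward: "(u,v) \<in> E \<Longrightarrow> y u < y v"
    and edge_continuous: "(u,v) \<in> E \<Longrightarrow> continuous_on {real_of_int (y u)..real_of_int (y v)} (X u v)"
    and edge_start: "(u,v) \<in> E \<Longrightarrow> X u v (y u) = x u"
    and edge_finish: "(u,v) \<in> E \<Longrightarrow> X u v (y v) = x v"
    and edges_meet_at_common_end:
      "\<lbrakk>(u,v) \<in> E; (u',v') \<in> E; (u,v) \<noteq> (u',v');
        t \<in> {real_of_int (y u)..real_of_int (y v)}; t \<in> {real_of_int (y u')..real_of_int (y v')};
        X u v t = X u' v' t\<rbrakk> \<Longrightarrow> \<exists>w\<in>{u,v} \<inter> {u',v'}. real_of_int (y w) = t"
begin

lemma converse: "height_drawing (E\<inverse>) x (\<lambda>v. - y v) (\<lambda>u v t. X v u (- t))"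
proof
  fix u v assume "(u,v) \<in> E\<inverse>"
  then have uv: "(v,u) \<in> E" by simp
  show "- y u < - y v" "X v u (- real_of_int (- y u)) = x u" "X v u (- real_of_int (- y v)) = x v"
    using edge_upward[OF uv] edge_start[OF uv] edge_finish[OF uv] by auto
  have "uminus ` {real_of_int (- y u)..real_of_int (- y v)} \<subseteq> {real_of_int (y v)..real_of_int (y u)}"
    by auto
  then show "continuous_on {real_of_int (- y u)..real_of_int (- y v)} (\<lambda>t. X v u (- t))"
    by (intro continuous_on_compose2[OF edge_continuous[OF uv]] continuous_intros)
next
  fix u v u' v' t
  assume "(u,v) \<in> E\<inverse>" "(u',v') \<in> E\<inverse>" "(u,v) \<noteq> (u',v')"
    "t \<in> {real_of_int (- y u)..real_of_int (- y v)}" "t \<in> {real_of_int (- y u')..real_of_int (- y v')}"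
    "X v u (- t) = X v' u' (- t)"
  then have "\<exists>w\<in>{v,u} \<inter> {v',u'}. real_of_int (y w) = - t"
    by (intro edges_meet_at_common_end) auto
  then show "\<exists>w\<in>{u,v} \<inter> {u',v'}. real_of_int (- y w) = t" by force
qed

lemma edges_meet_between:
  fixes s s' :: real
  assumes "(u,v) \<in> E" "(u',v') \<in> E" "(u,v) \<noteq> (u',v')" "s \<le> s'"
    and "{s..s'} \<subseteq> {real_of_int (y u)..real_of_int (y v)}" "{s..s'} \<subseteq> {real_of_int (y u')..real_of_int (y v')}"
    and "(X u v s - X u' v' s) * (X u v s' - X u' v' s') \<le> 0"
  shows "\<exists>w\<in>{u,v} \<inter> {u',v'}. s \<le> y w \<and> y w \<le> s'"
proof -
  have "continuous_on {s..s'} (X u v)" "continuous_on {s..s'} (X u' v')"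
    using continuous_on_subset edge_continuous assms(1,2,5,6) by blast+
  then obtain t where t: "t \<in> {s..s'}" "X u v t = X u' v' t"
    using continuous_functions_meet assms(4,7) by blast
  then show ?thesis
    using edges_meet_at_common_end[OF assms(1-3) _ _ t(2)] assms(5,6) by fastforce
qed

definition left_of :: "'v \<Rightarrow> 'v \<Rightarrow> 'v \<Rightarrow> bool" where
  "left_of p a b \<longleftrightarrow>
     (\<forall>t. real_of_int (y p) < t \<and> t < real_of_int (min (y a) (y b)) \<longrightarrow> X p a t < X p b t)"

lemma left_of_irrefl:
  assumes "(p,a) \<in> E"
  shows "\<not> left_of p a a"
proof
  assume "left_of p a a"
  moreover have "real_of_int (y p) < y p + 1/2" "y p + 1/2 < real_of_int (y a)"
    using edge_upward[OF assms] by linarith+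
  ultimately show False unfolding left_of_def by fastforce
qed

lemma left_of_total:
  assumes "(p,a) \<in> E" "(p,b) \<in> E" "a \<noteq> b"
  shows "left_of p a b \<or> left_of p b a"
proof (rule ccontr)
  assume "\<not> ?thesis"
  then obtain t t' where
    t: "real_of_int (y p) < t" "t < real_of_int (min (y a) (y b))" "X p b t \<le> X p a t" and
    t': "real_of_int (y p) < t'" "t' < real_of_int (min (y a) (y b))" "X p a t' \<le> X p b t'"
    unfolding left_of_def by (auto simp: min.commute not_less)
  have "(X p a (min t t') - X p b (min t t')) * (X p a (max t t') - X p b (max t t')) \<le> 0"
    using t t' by (cases "t \<le> t'") (auto simp: min_def max_def mult_le_0_iff)
  moreover have "{min t t'..max t t'} \<subseteq> {real_of_int (y p)..real_of_int (y a)}"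
    "{min t t'..max t t'} \<subseteq> {real_of_int (y p)..real_of_int (y b)}"
    using t t' by auto
  ultimately have "\<exists>w\<in>{p,a} \<inter> {p,b}. min t t' \<le> y w \<and> y w \<le> max t t'"
    using assms by (intro edges_meet_between) auto
  then show False using t t' assms(3) by auto
qed

lemma left_of_passes_left:
  assumes pa: "(p,a) \<in> E" and pb: "(p,b) \<in> E" and "left_of p a b" "y b \<le> y a"
  shows "X p a (y b) < x b"
proof (rule ccontr)
  assume "\<not> ?thesis"
  have "a \<noteq> b" using left_of_irrefl pb assms(3) by auto
  define t where "t = (real_of_int (y p) + real_of_int (y b)) / 2"
  have t: "y p < t" "t < y b" using edge_upward[OF pb] unfolding t_def by simp_all
  then have "X p a t < X p b t" using assms(3,4) unfolding left_of_def by auto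
  with \<open>\<not> ?thesis\<close> have "(X p a t - X p b t) * (X p a (y b) - X p b (y b)) \<le> 0"
    using edge_finish[OF pb] by (simp add: mult_nonpos_nonneg)
  then have "\<exists>w\<in>{p,a} \<inter> {p,b}. t \<le> y w \<and> y w \<le> real_of_int (y b)"
    using t assms(4) \<open>a \<noteq> b\<close> by (intro edges_meet_between[OF pa pb]) auto
  then show False using t \<open>a \<noteq> b\<close> by auto
qed

lemma left_of_passes_right:
  assumes pb: "(p,b) \<in> E" and pc: "(p,c) \<in> E" and "left_of p b c" "y b \<le> y c"
  shows "x b < X p c (y b)"
proof (rule ccontr)
  assume "\<not> ?thesis"
  have "b \<noteq> c" using left_of_irrefl pb assms(3) by auto
  define t where "t = (real_of_int (y p) + real_of_int (y b)) / 2"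
  have t: "y p < t" "t < y b" using edge_upward[OF pb] unfolding t_def by simp_all
  then have "X p b t < X p c t" using assms(3,4) unfolding left_of_def by auto
  with \<open>\<not> ?thesis\<close> have "(X p c t - X p b t) * (X p c (y b) - X p b (y b)) \<le> 0"
    using edge_finish[OF pb] by (simp add: mult_nonneg_nonpos)
  then have "\<exists>w\<in>{p,c} \<inter> {p,b}. t \<le> y w \<and> y w \<le> real_of_int (y b)"
    using t assms(4) \<open>b \<noteq> c\<close> by (intro edges_meet_between[OF pc pb]) auto
  then show False using t \<open>b \<noteq> c\<close> by auto
qed

lemma valley_shields_in_edges:
  assumes short: "all_paths_short E"
    and pa: "(p,a) \<in> E" and pb: "(p,b) \<in> E" and pc: "(p,c) \<in> E"
    and ab: "left_of p a b" and bc: "left_of p b c" and "y b \<le> y a" "y b \<le> y c"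
    and zb: "(z,b) \<in> E" and "z \<noteq> p"
  shows "y p < y z"
proof (rule ccontr)
  assume "\<not> y p < y z"
  \<comment> \<open>the edges pa and pc pass on either side of b at height y b, so zb, which starts
    at or below height y p, has to cross one of them\<close>
  have "a \<noteq> b" "b \<noteq> c" using left_of_irrefl pa pb ab bc by auto
  have "p \<noteq> b" using edge_upward[OF pb] by auto
  have "z \<noteq> a" "z \<noteq> c" using short pa pc zb unfolding all_paths_short_def by auto
  then have disjoint: "{p,a} \<inter> {z,b} = {}" "{p,c} \<inter> {z,b} = {}"
    using \<open>a \<noteq> b\<close> \<open>b \<noteq> c\<close> \<open>p \<noteq> b\<close> \<open>z \<noteq> p\<close> by auto
  have heights: "{real_of_int (y p)..real_of_int (y b)} \<subseteq> {real_of_int (y u)..real_of_int (y v)}"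
    if "(u,v) \<in> {(p,a), (p,c), (z,b)}" for u v
    using that \<open>\<not> y p < y z\<close> \<open>y b \<le> y a\<close> \<open>y b \<le> y c\<close> by auto
  have ends: "X p a (y p) = x p" "X p c (y p) = x p" "X z b (y b) = x b"
    using edge_start pa pc edge_finish zb by auto
  consider "x p \<le> X z b (y p)" | "X z b (y p) \<le> x p" by linarith
  then show False
  proof cases
    case 1
    then have "(X p c (y p) - X z b (y p)) * (X p c (y b) - X z b (y b)) \<le> 0"
      using left_of_passes_right[OF pb pc bc \<open>y b \<le> y c\<close>] ends by (simp add: mult_nonpos_nonneg)
    then have "\<exists>w\<in>{p,c} \<inter> {z,b}. real_of_int (y p) \<le> y w \<and> y w \<le> real_of_int (y b)"
      using heights \<open>z \<noteq> p\<close> edge_upward[OF pb] by (intro edges_meet_between[OF pc zb]) auto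
    then show False using disjoint by blast
  next
    case 2
    then have "(X p a (y p) - X z b (y p)) * (X p a (y b) - X z b (y b)) \<le> 0"
      using left_of_passes_left[OF pa pb ab \<open>y b \<le> y a\<close>] ends by (simp add: mult_nonneg_nonpos)
    then have "\<exists>w\<in>{p,a} \<inter> {z,b}. real_of_int (y p) \<le> y w \<and> y w \<le> real_of_int (y b)"
      using heights \<open>z \<noteq> p\<close> edge_upward[OF pb] by (intro edges_meet_between[OF pa zb]) auto
    then show False using disjoint by blast
  qed
qed

lemma shielded_out_neighbour:
  assumes "all_paths_short E" and out: "\<forall>c\<in>C. (p,c) \<in> E"
    and "finite C" and "2 * card (y ` C) + 1 \<le> card C"
  shows "\<exists>b\<in>C. \<forall>z. (z,b) \<in> E \<longrightarrow> z \<noteq> p \<longrightarrow> y p < y z"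
proof -
  have "\<forall>a\<in>C. \<forall>b\<in>C. a \<noteq> b \<longrightarrow> left_of p a b \<or> left_of p b a"
    using left_of_total out by blast
  then obtain a b c where "a \<in> C" "b \<in> C" "c \<in> C"
    "left_of p a b" "left_of p b c" "y b \<le> y a" "y b \<le> y c"
    using exists_valley[of C "left_of p" y] assms(3,4) by blast
  then show ?thesis using valley_shields_in_edges assms(1) out by blast
qed

end

definition neighbours :: "('v \<times> 'v) set \<Rightarrow> 'v \<Rightarrow> 'v set" where
  "neighbours E p = {c. (p,c) \<in> E \<or> (c,p) \<in> E}"

lemma neighbours_converse [simp]: "neighbours (E\<inverse>) p = neighbours E p"
  unfolding neighbours_def by auto

text \<open>Vertex p, entered from its parent q, roots a subtree of depth m in which every
  non-leaf vertex has at least r children.\<close>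
fun branching :: "('v \<times> 'v) set \<Rightarrow> nat \<Rightarrow> nat \<Rightarrow> 'v \<Rightarrow> 'v \<Rightarrow> bool" where
  "branching E r 0 p q = True"
| "branching E r (Suc m) p q =
     (\<exists>C \<subseteq> neighbours E p - {q}. finite C \<and> r \<le> card C \<and> (\<forall>c\<in>C. branching E r m c p))"

lemma branching_converse [simp]: "branching (E\<inverse>) r m p q = branching E r m p q"
  by (induction m arbitrary: p q) auto

lemma branching_mono: "E \<subseteq> E' \<Longrightarrow> branching E r m p q \<Longrightarrow> branching E' r m p q"
proof (induction m arbitrary: p q)
  case (Suc m)
  then obtain C where "C \<subseteq> neighbours E p - {q}" "finite C" "r \<le> card C"
    "\<forall>c\<in>C. branching E r m c p"
    by auto
  moreover have "neighbours E p \<subseteq> neighbours E' p" using Suc.prems(1) unfolding neighbours_def by auto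
  ultimately show ?case using Suc by (auto intro!: exI[of _ C])
qed simp

lemma all_paths_short_converse [simp]: "all_paths_short (E\<inverse>) = all_paths_short E"
  unfolding all_paths_short_def by blast

lemma branching_forces_long_edge:
  assumes "height_drawing E x y X" "all_paths_short E" "branching E r m p q"
    and "k < m" "2 * k + 1 \<le> r" "\<forall>c\<in>neighbours E p - {q}. (p,c) \<in> E"
  shows "\<exists>c\<in>neighbours E p - {q}. y p + int k < y c"
  using assms
proof (induction m arbitrary: E y X p q k)
  case (Suc m)
  interpret height_drawing E x y X by fact
  obtain C where C: "C \<subseteq> neighbours E p - {q}" "finite C" "r \<le> card C"
    "\<forall>c\<in>C. branching E r m c p"
    using Suc.prems(3) by auto
  have out: "\<forall>c\<in>C. (p,c) \<in> E" using C(1) Suc.prems(6) by auto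
  show ?case
  proof (rule ccontr)
    assume "\<not> ?case"
    then have "y ` C \<subseteq> {y p + 1..y p + int k}"
      using C(1) out edge_upward by force
    then have "card (y ` C) \<le> k"
      using card_mono[of "{y p + 1..y p + int k}" "y ` C"] by simp
    then obtain b where b: "b \<in> C" "\<forall>z. (z,b) \<in> E \<longrightarrow> z \<noteq> p \<longrightarrow> y p < y z"
      using shielded_out_neighbour[OF Suc.prems(2) out C(2)] C(3) Suc.prems(5) by force
    define k' where "k' = nat (y b - y p - 1)"
    have "int k' = y b - y p - 1" "k' < k"
      using b(1) out edge_upward \<open>\<not> ?case\<close> C(1) unfolding k'_def by force+
    have "\<exists>z\<in>neighbours (E\<inverse>) b - {p}. - y b + int k' < - y z"
    proof (rule Suc.IH)
      show "height_drawing (E\<inverse>) x (\<lambda>v. - y v) (\<lambda>u v t. X v u (- t))" by (rule converse)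
      show "\<forall>z\<in>neighbours (E\<inverse>) b - {p}. (b,z) \<in> E\<inverse>"
        using Suc.prems(2) out b(1) unfolding all_paths_short_def neighbours_def by blast
    qed (use Suc.prems C b \<open>k' < k\<close> in auto)
    then show False
      using b \<open>int k' = y b - y p - 1\<close> Suc.prems(2) out
      unfolding neighbours_def all_paths_short_def by force
  qed
qed simp

definition x_at_height :: "(real \<Rightarrow> real \<times> real) \<Rightarrow> real \<Rightarrow> real" where
  "x_at_height g t = fst (g (the_inv_into {0..1} (\<lambda>s. snd (g s)) t))"

lemma path_graph_over_height:
  fixes g :: "real \<Rightarrow> real \<times> real"
  assumes "path g" and mono: "strict_mono_on {0..1} (\<lambda>s. snd (g s))"
  shows "snd (g 0) < snd (g 1)"
    and "continuous_on {snd (g 0)..snd (g 1)} (x_at_height g)"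
    and "x_at_height g (snd (g 0)) = fst (g 0)" "x_at_height g (snd (g 1)) = fst (g 1)"
    and "t \<in> {snd (g 0)..snd (g 1)} \<Longrightarrow> (x_at_height g t, t) \<in> path_image g"
proof -
  define h where "h s = snd (g s)" for s
  define G where "G = the_inv_into {0..1} h"
  have cont_g: "continuous_on {0..1} g" using \<open>path g\<close> unfolding path_def .
  then have cont_h: "continuous_on {0..1} h" unfolding h_def by (intro continuous_intros)
  have inj: "inj_on h {0..1}" unfolding h_def by (rule strict_mono_on_imp_inj_on[OF mono])
  show "snd (g 0) < snd (g 1)" using strict_mono_onD[OF mono, of 0 1] by simp
  have image: "h ` {0..1} = {h 0..h 1}"
  proof
    show "h ` {0..1} \<subseteq> {h 0..h 1}"
      using strict_mono_on_leD[OF mono] unfolding h_def by fastforce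
    show "{h 0..h 1} \<subseteq> h ` {0..1}"
      using IVT'[of h 0 _ 1] cont_h by fastforce
  qed
  have G_h: "G (h s) = s" if "s \<in> {0..1}" for s
    unfolding G_def using the_inv_into_f_f[OF inj that] .
  have G_in: "G t \<in> {0..1}" if "t \<in> {h 0..h 1}" for t
    unfolding G_def by (rule the_inv_into_into[OF inj]) (use image that in auto)
  have h_G: "h (G t) = t" if "t \<in> {h 0..h 1}" for t
    unfolding G_def using f_the_inv_into_f[OF inj] image that by auto
  have "continuous_on {h 0..h 1} G"
    using continuous_on_inv[OF cont_h compact_Icc] G_h image by auto
  then have "continuous_on {h 0..h 1} (\<lambda>t. fst (g (G t)))"
    by (intro continuous_intros continuous_on_compose2[OF cont_g]) (use G_in in auto)
  then show "continuous_on {snd (g 0)..snd (g 1)} (x_at_height g)"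
    unfolding x_at_height_def h_def G_def by simp
  show "x_at_height g (snd (g 0)) = fst (g 0)" "x_at_height g (snd (g 1)) = fst (g 1)"
    using G_h[of 0] G_h[of 1] unfolding x_at_height_def h_def G_def by auto
  assume "t \<in> {snd (g 0)..snd (g 1)}"
  then have "g (G t) = (x_at_height g t, t)" "G t \<in> {0..1}"
    using h_G G_in unfolding x_at_height_def h_def G_def by (auto simp: prod_eq_iff)
  then show "(x_at_height g t, t) \<in> path_image g" unfolding path_image_def by force
qed

lemma upward_drawing_height_drawing:
  assumes drawing: "upward_planar_layered_drawing V E x y c"
  shows "height_drawing E x y (\<lambda>u v. x_at_height (c (u,v)))"
proof -
  have edge: "snd (c (u,v) 0) = y u" "snd (c (u,v) 1) = y v"
    "fst (c (u,v) 0) = x u" "fst (c (u,v) 1) = x v"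
    "path (c (u,v))" "strict_mono_on {0..1} (\<lambda>s. snd (c (u,v) s))"
    if "(u,v) \<in> E" for u v
    using drawing that
    unfolding upward_planar_layered_drawing_def pathstart_def pathfinish_def vpt_def by auto
  have crossings: "path_image (c e) \<inter> path_image (c e') \<subseteq> vpt x y ` ({fst e, snd e} \<inter> {fst e', snd e'})"
    if "e \<in> E" "e' \<in> E" "e \<noteq> e'" for e e'
    using drawing that unfolding upward_planar_layered_drawing_def by blast
  have graph: "y u < y v"
    "continuous_on {real_of_int (y u)..real_of_int (y v)} (x_at_height (c (u,v)))"
    "x_at_height (c (u,v)) (y u) = x u" "x_at_height (c (u,v)) (y v) = x v"
    "t \<in> {real_of_int (y u)..real_of_int (y v)} \<Longrightarrow> (x_at_height (c (u,v)) t, t) \<in> path_image (c (u,v))"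
    if "(u,v) \<in> E" for u v t
    using path_graph_over_height[OF edge(5,6)[OF that]] edge(1-4)[OF that] by auto
  show ?thesis
  proof
    fix u v assume "(u,v) \<in> E"
    then show "y u < y v" "x_at_height (c (u,v)) (y u) = x u" "x_at_height (c (u,v)) (y v) = x v"
      "continuous_on {real_of_int (y u)..real_of_int (y v)} (x_at_height (c (u,v)))"
      using graph by auto
  next
    fix u v u' v' t
    assume uv: "(u,v) \<in> E" "(u',v') \<in> E" "(u,v) \<noteq> (u',v')"
      and t: "t \<in> {real_of_int (y u)..real_of_int (y v)}" "t \<in> {real_of_int (y u')..real_of_int (y v')}"
      and meet: "x_at_height (c (u,v)) t = x_at_height (c (u',v')) t"
    have "(x_at_height (c (u,v)) t, t) \<in> path_image (c (u,v)) \<inter> path_image (c (u',v'))"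
      using graph(5)[OF uv(1) t(1)] graph(5)[OF uv(2) t(2)] meet by simp
    also have "\<dots> \<subseteq> vpt x y ` ({u,v} \<inter> {u',v'})"
      using crossings uv by force
    finally show "\<exists>w\<in>{u,v} \<inter> {u',v'}. real_of_int (y w) = t" unfolding vpt_def by auto
  qed
qed

lemma edge_le_drawing_span:
  assumes "finite E" "(u,v) \<in> E"
  shows "y v - y u \<le> int (drawing_span E y)"
proof -
  have "nat (y v - y u) \<le> drawing_span E y"
    unfolding drawing_span_def using assms by (intro Max_ge) force+
  then show ?thesis by linarith
qed

lemma branching_upward_span:
  assumes "\<exists>x y c. upward_planar_layered_drawing V E x y c" and "finite E" "all_paths_short E"
    and "branching E r m p q" "k < m" "2 * k + 1 \<le> r" "\<forall>c\<in>neighbours E p - {q}. (p,c) \<in> E"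
  shows "k < upward_span V E"
proof -
  obtain x y c where drawing: "upward_planar_layered_drawing V E x y c"
    and span: "drawing_span E y = upward_span V E"
    using LeastI_ex[where P="\<lambda>s. \<exists>x y c. upward_planar_layered_drawing V E x y c \<and> drawing_span E y = s"]
      assms(1) unfolding upward_span_def by blast
  obtain c' where "c' \<in> neighbours E p - {q}" "y p + int k < y c'"
    using branching_forces_long_edge[OF upward_drawing_height_drawing[OF drawing]] assms(3-7) by blast
  with assms(7) have "(p,c') \<in> E" by auto
  then have "y c' - y p \<le> int (upward_span V E)"
    using edge_le_drawing_span[OF assms(2)] span by metis
  then show ?thesis using \<open>y p + int k < y c'\<close> by linarith
qed

fun alt_size :: "nat \<Rightarrow> nat \<Rightarrow> nat" where
  "alt_size d 0 = 1"
| "alt_size d (Suc j) = 1 + d * alt_size d j"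

text \<open>Two alternating trees of depth j on the vertex interval [f, f + alt_size d j): in
  src_tree the root is the source f, whose d children are the sink roots (top vertices) of
  snk_trees of depth j - 1 filling consecutive blocks above f; in snk_tree the root is the
  sink f + alt_size d j - 1, whose d children are the source roots (bottom vertices) of
  src_trees filling consecutive blocks below it.\<close>
fun src_tree :: "nat \<Rightarrow> nat \<Rightarrow> nat \<Rightarrow> (nat \<times> nat) set"
  and snk_tree :: "nat \<Rightarrow> nat \<Rightarrow> nat \<Rightarrow> (nat \<times> nat) set" where
  "src_tree d 0 f = {}"
| "src_tree d (Suc j) f =
     (\<Union>i<d. insert (f, f + i * alt_size d j + alt_size d j) (snk_tree d j (f + 1 + i * alt_size d j)))"
| "snk_tree d 0 f = {}"
| "snk_tree d (Suc j) f =
     (\<Union>i<d. insert (f + i * alt_size d j, f + d * alt_size d j) (src_tree d j (f + i * alt_size d j)))"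

lemma alt_size_pos: "1 \<le> alt_size d j"
  by (induction j) auto

lemma block_unique:
  fixes S :: nat
  assumes "f + i * S \<le> v" "v < f + i * S + S" "f + k * S \<le> v" "v < f + k * S + S"
  shows "i = k"
proof (rule ccontr)
  assume "i \<noteq> k"
  then consider "Suc i \<le> k" | "Suc k \<le> i" by linarith
  then show False
    by cases (use mult_le_mono1[of "Suc i" k S] mult_le_mono1[of "Suc k" i S] assms in auto)
qed

lemma block_le:
  fixes S :: nat
  assumes "i < d"
  shows "i * S + S \<le> d * S"
  using mult_le_mono1[of "Suc i" d S] assms by simp

lemma block_index:
  fixes S :: nat
  assumes "1 \<le> S" "f \<le> v" "v < f + d * S"
  obtains i where "i < d" "f + i * S \<le> v" "v < f + i * S + S"
proof
  define n where "n = v - f"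
  show "n div S < d" using assms unfolding n_def by (simp add: div_less_iff_less_mult)
  show "f + n div S * S \<le> v" using div_times_less_eq_dividend[of n S] assms unfolding n_def by linarith
  have "n < n div S * S + S"
    using mod_less_divisor[of S n] div_mult_mod_eq[of n S] assms(1) by linarith
  then show "v < f + n div S * S + S" using assms unfolding n_def by linarith
qed

lemma alt_tree_edge_range:
  "(\<forall>f a b. (a,b) \<in> src_tree d j f \<longrightarrow> f \<le> a \<and> a < b \<and> b < f + alt_size d j) \<and>
   (\<forall>f a b. (a,b) \<in> snk_tree d j f \<longrightarrow> f \<le> a \<and> a < b \<and> b < f + alt_size d j)"
proof (induction j)
  case (Suc j)
  let ?S = "alt_size d j"
  have src: "f \<le> a \<and> a < b \<and> b < f + alt_size d (Suc j)" if "(a,b) \<in> src_tree d (Suc j) f" for f a b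
  proof -
    from that obtain i where "i < d"
      and edge: "(a,b) = (f, f + i * ?S + ?S) \<or> (a,b) \<in> snk_tree d j (f + 1 + i * ?S)"
      by auto
    from edge show ?thesis
    proof
      assume "(a,b) = (f, f + i * ?S + ?S)"
      then show ?thesis using block_le[of i d ?S] alt_size_pos[of d j] \<open>i < d\<close> by auto
    next
      assume "(a,b) \<in> snk_tree d j (f + 1 + i * ?S)"
      then have "f + 1 + i * ?S \<le> a \<and> a < b \<and> b < f + 1 + i * ?S + ?S"
        by (rule Suc.IH[THEN conjunct2, rule_format])
      then show ?thesis using block_le[of i d ?S] \<open>i < d\<close> by auto
    qed
  qed
  have snk: "f \<le> a \<and> a < b \<and> b < f + alt_size d (Suc j)" if "(a,b) \<in> snk_tree d (Suc j) f" for f a b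
  proof -
    from that obtain i where "i < d"
      and edge: "(a,b) = (f + i * ?S, f + d * ?S) \<or> (a,b) \<in> src_tree d j (f + i * ?S)"
      by auto
    from edge show ?thesis
    proof
      assume "(a,b) = (f + i * ?S, f + d * ?S)"
      then show ?thesis using block_le[of i d ?S] alt_size_pos[of d j] \<open>i < d\<close> by auto
    next
      assume "(a,b) \<in> src_tree d j (f + i * ?S)"
      then have "f + i * ?S \<le> a \<and> a < b \<and> b < f + i * ?S + ?S"
        by (rule Suc.IH[THEN conjunct1, rule_format])
      then show ?thesis using block_le[of i d ?S] \<open>i < d\<close> by auto
    qed
  qed
  show ?case by (intro conjI allI impI src snk)
qed simp

lemma src_tree_edge_range: "(a,b) \<in> src_tree d j f \<Longrightarrow> f \<le> a \<and> a < b \<and> b < f + alt_size d j"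
  by (rule alt_tree_edge_range[THEN conjunct1, rule_format])

lemma snk_tree_edge_range: "(a,b) \<in> snk_tree d j f \<Longrightarrow> f \<le> a \<and> a < b \<and> b < f + alt_size d j"
  by (rule alt_tree_edge_range[THEN conjunct2, rule_format])

lemma src_tree_SucE:
  assumes "(a,b) \<in> src_tree d (Suc j) f"
  obtains (root) i where "i < d" "a = f" "b = f + i * alt_size d j + alt_size d j"
  | (child) i where "i < d" "(a,b) \<in> snk_tree d j (f + 1 + i * alt_size d j)"
      "f + 1 + i * alt_size d j \<le> a" "a < b" "b < f + 1 + i * alt_size d j + alt_size d j"
proof -
  from assms obtain i where "i < d" and
    "(a,b) = (f, f + i * alt_size d j + alt_size d j) \<or> (a,b) \<in> snk_tree d j (f + 1 + i * alt_size d j)"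
    by auto
  from this(2) show thesis
  proof
    assume "(a,b) = (f, f + i * alt_size d j + alt_size d j)"
    then show thesis using root[OF \<open>i < d\<close>] by simp
  next
    assume ab: "(a,b) \<in> snk_tree d j (f + 1 + i * alt_size d j)"
    then show thesis using child[OF \<open>i < d\<close> ab] snk_tree_edge_range[OF ab] by blast
  qed
qed

lemma snk_tree_SucE:
  assumes "(a,b) \<in> snk_tree d (Suc j) f"
  obtains (root) i where "i < d" "a = f + i * alt_size d j" "b = f + d * alt_size d j"
  | (child) i where "i < d" "(a,b) \<in> src_tree d j (f + i * alt_size d j)"
      "f + i * alt_size d j \<le> a" "a < b" "b < f + i * alt_size d j + alt_size d j"
proof -
  from assms obtain i where "i < d" and
    "(a,b) = (f + i * alt_size d j, f + d * alt_size d j) \<or> (a,b) \<in> src_tree d j (f + i * alt_size d j)"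
    by auto
  from this(2) show thesis
  proof
    assume "(a,b) = (f + i * alt_size d j, f + d * alt_size d j)"
    then show thesis using root[OF \<open>i < d\<close>] by simp
  next
    assume ab: "(a,b) \<in> src_tree d j (f + i * alt_size d j)"
    then show thesis using child[OF \<open>i < d\<close> ab] src_tree_edge_range[OF ab] by blast
  qed
qed

lemma alt_tree_short:
  "(\<forall>f. all_paths_short (src_tree d j f) \<and> (\<forall>u. (u,f) \<notin> src_tree d j f)) \<and>
   (\<forall>f. all_paths_short (snk_tree d j f) \<and> (\<forall>w. (f + alt_size d j - 1, w) \<notin> snk_tree d j f))"
proof (induction j)
  case (Suc j)
  let ?S = "alt_size d j"
  have S: "1 \<le> ?S" by (rule alt_size_pos)
  have src_IH: "(u,v) \<in> src_tree d j g \<Longrightarrow> (v,w) \<notin> src_tree d j g" for g u v w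
    using Suc.IH unfolding all_paths_short_def by blast
  have snk_IH: "(u,v) \<in> snk_tree d j g \<Longrightarrow> (v,w) \<notin> snk_tree d j g"
    "(g + ?S - 1, w) \<notin> snk_tree d j g" for g u v w
    using Suc.IH unfolding all_paths_short_def by blast+
  have src_root: "(u,f) \<notin> src_tree d (Suc j) f" for u f
  proof
    assume "(u,f) \<in> src_tree d (Suc j) f"
    then show False using S by (cases rule: src_tree_SucE) auto
  qed
  have snk_root: "(f + alt_size d (Suc j) - 1, w) \<notin> snk_tree d (Suc j) f" for f w
  proof
    assume "(f + alt_size d (Suc j) - 1, w) \<in> snk_tree d (Suc j) f"
    then show False
    proof (cases rule: snk_tree_SucE)
      case (root i)
      then show False using S by simp
    next
      case (child i)
      then show False using block_le[of i d ?S] by simp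
    qed
  qed
  have "(v,w) \<notin> src_tree d (Suc j) f" if uv: "(u,v) \<in> src_tree d (Suc j) f" for f u v w
  proof
    assume "(v,w) \<in> src_tree d (Suc j) f"
    then show False
    proof (cases rule: src_tree_SucE)
      case (root k)
      then show False using uv src_root by blast
    next
      case vw: (child k)
      from uv show False
      proof (cases rule: src_tree_SucE)
        case (root i)
        then have "i = k" using vw S by (intro block_unique[of "f + 1" i ?S v k]) linarith+
        then show False using root vw snk_IH(2)[of "f + 1 + k * ?S" w] S by simp
      next
        case (child i)
        then have "i = k" using vw by (intro block_unique[of "f + 1" i ?S v k]) linarith+
        then show False using child vw snk_IH(1) by blast
      qed
    qed
  qed
  moreover have "(v,w) \<notin> snk_tree d (Suc j) f" if uv: "(u,v) \<in> snk_tree d (Suc j) f" for f u v w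
  proof
    assume vw: "(v,w) \<in> snk_tree d (Suc j) f"
    from uv show False
    proof (cases rule: snk_tree_SucE)
      case (root i)
      then show False using vw snk_root by simp
    next
      case uv': (child i)
      from vw show False
      proof (cases rule: snk_tree_SucE)
        case (root k)
        then have "i = k" using uv' S by (intro block_unique[of f i ?S v k]) linarith+
        then show False using root uv' by simp
      next
        case (child k)
        then have "i = k" using uv' by (intro block_unique[of f i ?S v k]) linarith+
        then show False using child uv' src_IH by blast
      qed
    qed
  qed
  ultimately show ?case using src_root snk_root unfolding all_paths_short_def by blast
qed (simp add: all_paths_short_def)

definition non_crossing :: "(nat \<times> nat) set \<Rightarrow> bool" where
  "non_crossing E \<longleftrightarrow> (\<forall>(a,b)\<in>E. \<forall>(c,e)\<in>E. \<not> (a < c \<and> c < b \<and> b < e))"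

lemma alt_tree_non_crossing: "(\<forall>f. non_crossing (src_tree d j f)) \<and> (\<forall>f. non_crossing (snk_tree d j f))"
proof (induction j)
  case (Suc j)
  let ?S = "alt_size d j"
  have S: "1 \<le> ?S" by (rule alt_size_pos)
  have IH: "\<not> (a < c \<and> c < b \<and> b < e)"
    if "(a,b) \<in> T" "(c,e) \<in> T" "T = src_tree d j g \<or> T = snk_tree d j g" for T g a b c e
    using Suc.IH that unfolding non_crossing_def by blast
  have "\<not> (a < c \<and> c < b \<and> b < e)"
    if ab: "(a,b) \<in> src_tree d (Suc j) f" and ce: "(c,e) \<in> src_tree d (Suc j) f" for f a b c e
  proof
    assume cross: "a < c \<and> c < b \<and> b < e"
    from ce show False
    proof (cases rule: src_tree_SucE)
      case (root k)
      then show False using cross src_tree_edge_range[OF ab] by simp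
    next
      case ce': (child k)
      from ab show False
      proof (cases rule: src_tree_SucE)
        case (root i)
        then have "i = k" using ce' cross S by (intro block_unique[of "f + 1" i ?S b k]) linarith+
        then show False using root ce' cross by simp
      next
        case (child i)
        then have "i = k" using ce' cross by (intro block_unique[of "f + 1" i ?S c k]) linarith+
        then show False using child ce' cross IH by blast
      qed
    qed
  qed
  moreover have "\<not> (a < c \<and> c < b \<and> b < e)"
    if ab: "(a,b) \<in> snk_tree d (Suc j) f" and ce: "(c,e) \<in> snk_tree d (Suc j) f" for f a b c e
  proof
    assume cross: "a < c \<and> c < b \<and> b < e"
    from ab show False
    proof (cases rule: snk_tree_SucE)
      case (root i)
      then show False using cross snk_tree_edge_range[OF ce] by simp
    next
      case ab': (child i)
      from ce show False
      proof (cases rule: snk_tree_SucE)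
        case (root k)
        then have "i = k" using ab' cross S by (intro block_unique[of f i ?S c k]) linarith+
        then show False using root ab' cross by simp
      next
        case (child k)
        then have "i = k" using ab' cross by (intro block_unique[of f i ?S c k]) linarith+
        then show False using child ab' cross IH by blast
      qed
    qed
  qed
  ultimately show ?case unfolding non_crossing_def by blast
qed (simp add: non_crossing_def)

lemma card_UN_disjoint_const:
  assumes "\<And>i. i < d \<Longrightarrow> finite (B i)" "\<And>i. i < d \<Longrightarrow> card (B i) = S"
    and "\<And>i k x. i < d \<Longrightarrow> k < d \<Longrightarrow> x \<in> B i \<Longrightarrow> x \<in> B k \<Longrightarrow> i = k"
  shows "finite (\<Union>i<d. B i)" "card (\<Union>i<d. B i) = d * S"
proof -
  have "card (\<Union>i<d. B i) = (\<Sum>i<d. card (B i))"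
    using assms(1,3) by (intro card_UN_disjoint) blast+
  then show "card (\<Union>i<d. B i) = d * S" using assms(2) by simp
  show "finite (\<Union>i<d. B i)" using assms(1) by simp
qed

lemma alt_tree_card:
  "(\<forall>f. finite (src_tree d j f) \<and> card (src_tree d j f) = alt_size d j - 1) \<and>
   (\<forall>f. finite (snk_tree d j f) \<and> card (snk_tree d j f) = alt_size d j - 1)"
proof (induction j)
  case (Suc j)
  let ?S = "alt_size d j"
  have S: "1 \<le> ?S" by (rule alt_size_pos)
  have src: "finite (src_tree d (Suc j) f) \<and> card (src_tree d (Suc j) f) = d * ?S" for f
  proof -
    define B where "B i = insert (f, f + i * ?S + ?S) (snk_tree d j (f + 1 + i * ?S))" for i
    have "finite (B i)" "card (B i) = ?S" for i
    proof -
      have "(f, f + i * ?S + ?S) \<notin> snk_tree d j (f + 1 + i * ?S)"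
        using snk_tree_edge_range by fastforce
      then show "finite (B i)" "card (B i) = ?S" using Suc.IH S unfolding B_def by simp_all
    qed
    moreover have "i = k" if "x \<in> B i" "x \<in> B k" for i k x
    proof -
      have block: "f + 1 + i * ?S \<le> snd x \<and> snd x < f + 1 + i * ?S + ?S" if "x \<in> B i" for i
        using that S snk_tree_edge_range[of "fst x" "snd x" d j "f + 1 + i * ?S"]
        unfolding B_def by auto
      show ?thesis
        using block[OF that(1)] block[OF that(2)] by (intro block_unique[of "f + 1" i ?S "snd x" k]) auto
    qed
    ultimately show ?thesis
      using card_UN_disjoint_const[of d B ?S] unfolding B_def by simp
  qed
  have snk: "finite (snk_tree d (Suc j) f) \<and> card (snk_tree d (Suc j) f) = d * ?S" for f
  proof -
    define B where "B i = insert (f + i * ?S, f + d * ?S) (src_tree d j (f + i * ?S))" for i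
    have "finite (B i)" "card (B i) = ?S" if "i < d" for i
    proof -
      have "(f + i * ?S, f + d * ?S) \<notin> src_tree d j (f + i * ?S)"
        using src_tree_edge_range block_le[OF that, of ?S] by fastforce
      then show "finite (B i)" "card (B i) = ?S" using Suc.IH S unfolding B_def by simp_all
    qed
    moreover have "i = k" if "x \<in> B i" "x \<in> B k" for i k x
    proof -
      have block: "f + i * ?S \<le> fst x \<and> fst x < f + i * ?S + ?S" if "x \<in> B i" for i
        using that S src_tree_edge_range[of "fst x" "snd x" d j "f + i * ?S"]
        unfolding B_def by auto
      show ?thesis
        using block[OF that(1)] block[OF that(2)] by (intro block_unique[of f i ?S "fst x" k]) auto
    qed
    ultimately show ?thesis
      using card_UN_disjoint_const[of d B ?S] unfolding B_def by simp
  qed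
  show ?case using src snk by simp
qed simp

lemma alt_tree_connected:
  "(\<forall>f v. f \<le> v \<and> v < f + alt_size d j \<longrightarrow> (v, f) \<in> (src_tree d j f \<union> (src_tree d j f)\<inverse>)\<^sup>*) \<and>
   (\<forall>f v. f \<le> v \<and> v < f + alt_size d j \<longrightarrow>
      (v, f + alt_size d j - 1) \<in> (snk_tree d j f \<union> (snk_tree d j f)\<inverse>)\<^sup>*)"
proof (induction j)
  case (Suc j)
  let ?S = "alt_size d j"
  have S: "1 \<le> ?S" by (rule alt_size_pos)
  have lift: "(u, w) \<in> (E' \<union> E'\<inverse>)\<^sup>*" if "(u, w) \<in> (E \<union> E\<inverse>)\<^sup>*" "E \<subseteq> E'" for E E' :: "(nat \<times> nat) set" and u w
  proof -
    have "E \<union> E\<inverse> \<subseteq> E' \<union> E'\<inverse>" using that(2) by auto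
    then show ?thesis using rtrancl_mono that(1) by blast
  qed
  have src: "(v, f) \<in> (src_tree d (Suc j) f \<union> (src_tree d (Suc j) f)\<inverse>)\<^sup>*"
    if "f \<le> v \<and> v < f + alt_size d (Suc j)" for f v
  proof (cases "v = f")
    case False
    then have "f + 1 \<le> v" "v < f + 1 + d * ?S" using that by auto
    then obtain i where i: "i < d" "f + 1 + i * ?S \<le> v" "v < f + 1 + i * ?S + ?S"
      by (rule block_index[OF S])
    let ?T = "snk_tree d j (f + 1 + i * ?S)"
    have "(v, f + 1 + i * ?S + ?S - 1) \<in> (?T \<union> ?T\<inverse>)\<^sup>*"
      by (rule Suc.IH[THEN conjunct2, rule_format]) (use i in simp)
    then have "(v, f + 1 + i * ?S + ?S - 1) \<in> (src_tree d (Suc j) f \<union> (src_tree d (Suc j) f)\<inverse>)\<^sup>*"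
      by (rule lift) (use i(1) in auto)
    moreover have "(f, f + 1 + i * ?S + ?S - 1) \<in> src_tree d (Suc j) f" using i(1) by auto
    ultimately show ?thesis by (simp add: rtrancl.rtrancl_into_rtrancl)
  qed simp
  have snk: "(v, f + alt_size d (Suc j) - 1) \<in> (snk_tree d (Suc j) f \<union> (snk_tree d (Suc j) f)\<inverse>)\<^sup>*"
    if "f \<le> v \<and> v < f + alt_size d (Suc j)" for f v
  proof (cases "v = f + d * ?S")
    case False
    then have "f \<le> v" "v < f + d * ?S" using that by auto
    then obtain i where i: "i < d" "f + i * ?S \<le> v" "v < f + i * ?S + ?S"
      by (rule block_index[OF S])
    let ?T = "src_tree d j (f + i * ?S)"
    have "(v, f + i * ?S) \<in> (?T \<union> ?T\<inverse>)\<^sup>*"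
      by (rule Suc.IH[THEN conjunct1, rule_format]) (use i in simp)
    then have "(v, f + i * ?S) \<in> (snk_tree d (Suc j) f \<union> (snk_tree d (Suc j) f)\<inverse>)\<^sup>*"
      by (rule lift) (use i(1) in auto)
    moreover have "(f + i * ?S, f + d * ?S) \<in> snk_tree d (Suc j) f" using i(1) by auto
    ultimately show ?thesis by (simp add: rtrancl.rtrancl_into_rtrancl)
  qed simp
  show ?case by (intro conjI allI impI) (erule src, erule snk)
qed simp

lemma alt_tree_branching:
  "(\<forall>f q. q < f \<or> f + alt_size d j \<le> q \<longrightarrow> branching (src_tree d j f) d j f q) \<and>
   (\<forall>f q. q < f \<or> f + alt_size d j \<le> q \<longrightarrow> branching (snk_tree d j f) d j (f + alt_size d j - 1) q)"
proof (induction j)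
  case (Suc j)
  let ?S = "alt_size d j"
  have S: "1 \<le> ?S" by (rule alt_size_pos)
  have src: "branching (src_tree d (Suc j) f) d (Suc j) f q"
    if q: "q < f \<or> f + alt_size d (Suc j) \<le> q" for f q
  proof -
    define C where "C = (\<lambda>i. f + i * ?S + ?S) ` {..<d}"
    have "card C = d" using S unfolding C_def by (subst card_image) (auto simp: inj_on_def)
    moreover have "C \<subseteq> neighbours (src_tree d (Suc j) f) f - {q}"
    proof
      fix c assume "c \<in> C"
      then obtain i where "i < d" "c = f + i * ?S + ?S" unfolding C_def by auto
      then show "c \<in> neighbours (src_tree d (Suc j) f) f - {q}"
        using q block_le[of i d ?S] unfolding neighbours_def by auto
    qed
    moreover have "\<forall>c\<in>C. branching (src_tree d (Suc j) f) d j c f"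
    proof
      fix c assume "c \<in> C"
      then obtain i where i: "i < d" "c = f + i * ?S + ?S" unfolding C_def by auto
      have "branching (snk_tree d j (f + 1 + i * ?S)) d j (f + 1 + i * ?S + ?S - 1) f"
        by (rule Suc.IH[THEN conjunct2, rule_format]) simp
      then have "branching (snk_tree d j (f + 1 + i * ?S)) d j c f" using i(2) by simp
      moreover have "snk_tree d j (f + 1 + i * ?S) \<subseteq> src_tree d (Suc j) f" using i(1) by auto
      ultimately show "branching (src_tree d (Suc j) f) d j c f" by (rule branching_mono[rotated])
    qed
    ultimately show ?thesis unfolding branching.simps by (intro exI[of _ C]) (simp add: C_def)
  qed
  have snk: "branching (snk_tree d (Suc j) f) d (Suc j) (f + alt_size d (Suc j) - 1) q"
    if q: "q < f \<or> f + alt_size d (Suc j) \<le> q" for f q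
  proof -
    define C where "C = (\<lambda>i. f + i * ?S) ` {..<d}"
    have "card C = d" using S unfolding C_def by (subst card_image) (auto simp: inj_on_def)
    moreover have "C \<subseteq> neighbours (snk_tree d (Suc j) f) (f + alt_size d (Suc j) - 1) - {q}"
    proof
      fix c assume "c \<in> C"
      then obtain i where "i < d" "c = f + i * ?S" unfolding C_def by auto
      then show "c \<in> neighbours (snk_tree d (Suc j) f) (f + alt_size d (Suc j) - 1) - {q}"
        using q block_le[of i d ?S] unfolding neighbours_def by auto
    qed
    moreover have "\<forall>c\<in>C. branching (snk_tree d (Suc j) f) d j c (f + alt_size d (Suc j) - 1)"
    proof
      fix c assume "c \<in> C"
      then obtain i where i: "i < d" "c = f + i * ?S" unfolding C_def by auto
      then have "branching (src_tree d j c) d j c (f + alt_size d (Suc j) - 1)"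
        using block_le[of i d ?S] by (intro Suc.IH[THEN conjunct1, rule_format]) simp
      moreover have "src_tree d j c \<subseteq> snk_tree d (Suc j) f" using i by auto
      ultimately show "branching (snk_tree d (Suc j) f) d j c (f + alt_size d (Suc j) - 1)"
        by (rule branching_mono[rotated])
    qed
    ultimately show ?thesis unfolding branching.simps by (intro exI[of _ C]) (simp add: C_def)
  qed
  show ?case by (intro conjI allI impI src snk)
qed simp

lemma parabola_chord_point:
  fixes a b :: real
  assumes "p \<in> closed_segment (a\<^sup>2, a) (b\<^sup>2, b)" "a \<le> b"
  shows "a \<le> snd p" "snd p \<le> b" "fst p = (snd p)\<^sup>2 - (snd p - a) * (snd p - b)"
proof -
  obtain u where u: "0 \<le> u" "u \<le> 1" "p = (1 - u) *\<^sub>R (a\<^sup>2, a) + u *\<^sub>R (b\<^sup>2, b)"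
    using assms(1) unfolding closed_segment_def by auto
  have p: "snd p = (1 - u) * a + u * b" "fst p = (1 - u) * a\<^sup>2 + u * b\<^sup>2" using u(3) by auto
  have "u * a \<le> u * b" "(1 - u) * a \<le> (1 - u) * b"
    using u assms(2) by (intro mult_left_mono; simp)+
  then show "a \<le> snd p" "snd p \<le> b" unfolding p by (simp_all add: algebra_simps)
  show "fst p = (snd p)\<^sup>2 - (snd p - a) * (snd p - b)"
    unfolding p by (simp add: algebra_simps power2_eq_square)
qed

lemma nested_parabola_chords_meet:
  fixes a b c e Y :: real
  assumes "a \<le> c" "e \<le> b" "c \<le> Y" "Y \<le> e" "(a,b) \<noteq> (c,e)"
    and "(Y - a) * (b - Y) = (Y - c) * (e - Y)"
  shows "(Y = a \<or> Y = b) \<and> (Y = c \<or> Y = e)"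
proof -
  have "(Y - a) * (b - Y) - (Y - c) * (e - Y) = (c - a) * (b - Y) + (Y - c) * (b - e)"
    by (simp add: algebra_simps)
  moreover have "(c - a) * (b - Y) \<ge> 0" "(Y - c) * (b - e) \<ge> 0" using assms(1-4) by auto
  ultimately have "(c - a) * (b - Y) = 0" "(Y - c) * (b - e) = 0" using assms(6) by linarith+
  then show ?thesis using assms(1-5) by auto
qed

lemma parabola_chords_meet:
  fixes a b c e Y :: real
  assumes "a < b" "c < e" "a \<le> Y" "Y \<le> b" "c \<le> Y" "Y \<le> e" "(a,b) \<noteq> (c,e)"
    and "(Y - a) * (Y - b) = (Y - c) * (Y - e)"
    and "\<not> (a < c \<and> c < b \<and> b < e)" "\<not> (c < a \<and> a < e \<and> e < b)"
  shows "(Y = a \<or> Y = b) \<and> (Y = c \<or> Y = e)"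
proof -
  have eq: "(Y - a) * (b - Y) = (Y - c) * (e - Y)" using assms(8) by (simp add: algebra_simps)
  consider "b \<le> c" | "e \<le> a" | "a \<le> c" "e \<le> b" | "c \<le> a" "b \<le> e"
    using assms by linarith
  then show ?thesis
  proof cases
    case 3
    then show ?thesis using nested_parabola_chords_meet[OF 3 assms(5,6,7) eq] by blast
  next
    case 4
    then show ?thesis using nested_parabola_chords_meet[OF 4 assms(3,4) _ eq[symmetric]] assms(7) by auto
  qed (use assms in auto)
qed

lemma vpt_parabola: "vpt (\<lambda>v::nat. (real v)\<^sup>2) int v = ((real v)\<^sup>2, real v)"
  unfolding vpt_def by simp

lemma parabola_segment_point:
  fixes a b :: nat
  assumes "p \<in> path_image (linepath (vpt (\<lambda>v. (real v)\<^sup>2) int a) (vpt (\<lambda>v. (real v)\<^sup>2) int b))" "a < b"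
  shows "real a \<le> snd p" "snd p \<le> real b" "fst p = (snd p)\<^sup>2 - (snd p - real a) * (snd p - real b)"
  using parabola_chord_point[of p "real a" "real b"] assms unfolding vpt_parabola path_image_linepath
  by auto

text \<open>Two chords of the parabola whose height intervals are nested or disjoint meet only at a
  common endpoint.\<close>
lemma non_crossing_parabola_drawing:
  fixes E :: "(nat \<times> nat) set"
  assumes up: "\<forall>(a,b)\<in>E. a < b" and "non_crossing E"
  shows "upward_planar_layered_drawing V E (\<lambda>v. (real v)\<^sup>2) int
           (\<lambda>e. linepath (vpt (\<lambda>v. (real v)\<^sup>2) int (fst e)) (vpt (\<lambda>v. (real v)\<^sup>2) int (snd e)))"
  (is "upward_planar_layered_drawing V E ?x ?y ?c")
proof -
  have inj: "inj_on (vpt ?x ?y) V" unfolding vpt_parabola by (auto simp: inj_on_def)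
  have edge: "path (?c (u,v)) \<and> pathstart (?c (u,v)) = vpt ?x ?y u \<and>
      pathfinish (?c (u,v)) = vpt ?x ?y v \<and> strict_mono_on {0..1} (\<lambda>t. snd (?c (u,v) t)) \<and>
      path_image (?c (u,v)) \<inter> vpt ?x ?y ` V \<subseteq> {vpt ?x ?y u, vpt ?x ?y v}"
    if uv: "(u,v) \<in> E" for u v
  proof (intro conjI)
    have "u < v" using up uv by auto
    show "path (?c (u,v))" "pathstart (?c (u,v)) = vpt ?x ?y u" "pathfinish (?c (u,v)) = vpt ?x ?y v"
      by simp_all
    show "strict_mono_on {0..1} (\<lambda>t. snd (?c (u,v) t))"
    proof (rule strict_mono_onI)
      fix r s :: real assume "r < s"
      then have "real u * (s - r) < real v * (s - r)" using \<open>u < v\<close> by simp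
      then show "snd (?c (u,v) r) < snd (?c (u,v) s)"
        unfolding vpt_parabola linepath_def by (simp add: algebra_simps)
    qed
    show "path_image (?c (u,v)) \<inter> vpt ?x ?y ` V \<subseteq> {vpt ?x ?y u, vpt ?x ?y v}"
    proof
      fix p assume p: "p \<in> path_image (?c (u,v)) \<inter> vpt ?x ?y ` V"
      then obtain w where w: "p = ((real w)\<^sup>2, real w)" unfolding vpt_parabola by auto
      have "fst p = (snd p)\<^sup>2 - (snd p - real u) * (snd p - real v)"
        using parabola_segment_point(3)[of p u v] p \<open>u < v\<close> by auto
      then have "w = u \<or> w = v" using w by simp
      then show "p \<in> {vpt ?x ?y u, vpt ?x ?y v}" using w unfolding vpt_parabola by auto
    qed
  qed
  have crossings: "path_image (?c e) \<inter> path_image (?c e') \<subseteq> vpt ?x ?y ` ({fst e, snd e} \<inter> {fst e', snd e'})"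
    if e: "e \<in> E" "e' \<in> E" "e \<noteq> e'" for e e'
  proof
    fix p assume p: "p \<in> path_image (?c e) \<inter> path_image (?c e')"
    obtain a b c d where ab: "e = (a,b)" and cd: "e' = (c,d)" by (cases e, cases e')
    have "a < b" "c < d" using up e ab cd by auto
    then have "(snd p = real a \<or> snd p = real b) \<and> (snd p = real c \<or> snd p = real d)"
      using parabola_segment_point[of p a b] parabola_segment_point[of p c d] p ab cd e
        \<open>non_crossing E\<close> unfolding non_crossing_def
      by (intro parabola_chords_meet) auto
    then obtain w where w: "w \<in> {a,b} \<inter> {c,d}" "snd p = real w" by auto
    then have "fst p = (real w)\<^sup>2"
      using parabola_segment_point(3)[of p a b] p ab \<open>a < b\<close> by auto
    then have "p = vpt ?x ?y w" using w unfolding vpt_parabola by (simp add: prod_eq_iff)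
    then show "p \<in> vpt ?x ?y ` ({fst e, snd e} \<inter> {fst e', snd e'})" using w ab cd by auto
  qed
  show ?thesis unfolding upward_planar_layered_drawing_def using inj edge crossings by auto
qed

lemma log_bounds_between_powers:
  fixes d n k :: nat
  assumes "2 \<le> d" "d ^ k \<le> n" "n \<le> d ^ Suc k"
  shows "real k \<le> log 2 n" "log 2 n \<le> real (Suc k) * log 2 d"
proof -
  have "0 < d ^ k" using assms(1) by simp
  moreover from this have "0 < n" using assms(2) by (rule less_le_trans)
  ultimately have pos: "0 < real (d ^ k)" "0 < real n" by simp_all
  have "1 \<le> log 2 d" using assms(1) by (simp add: le_log_iff)
  then have "real k \<le> real k * log 2 d" using mult_left_mono[of 1 "log 2 d" "real k"] by simp
  also have "\<dots> = log 2 (real (d ^ k))" using assms(1) by (simp add: log_nat_power)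
  also have "\<dots> \<le> log 2 n" using pos(1) assms(2) by (intro log_mono) simp_all
  finally show "real k \<le> log 2 n" .
  have "real n \<le> real (d ^ Suc k)" using assms(3) by (rule of_nat_mono)
  then have "log 2 n \<le> log 2 (real (d ^ Suc k))" using pos(2) by (intro log_mono) simp_all
  also have "\<dots> = real (Suc k) * log 2 d" using assms(1) log_nat_power[of "real d" 2 "Suc k"] by simp
  finally show "log 2 n \<le> real (Suc k) * log 2 d" .
qed

text \<open>With L = log 2 (s + 1) the ratio is at most (s + 2)(1 + L) / (2 L), which is below
  s + 1 once L > 2.\<close>
lemma log_ratio_bound:
  fixes s d n :: nat
  assumes "4 \<le> s" "d = 2 * s + 1" "d ^ (s + 1) \<le> n" "n \<le> d ^ (s + 2)"
  shows "log 2 n / (2 * log 2 (log 2 n)) < real s + 1"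
proof -
  define L where "L = log 2 (real s + 1)"
  define A where "A = log 2 (real n)"
  have A: "real (s + 1) \<le> A" "A \<le> real (s + 2) * log 2 d"
    using log_bounds_between_powers[of d "s + 1" n] assms unfolding A_def by simp_all
  have "2 < L" using assms(1) by (simp add: L_def less_log_iff)
  have "log 2 d \<le> log 2 (2 * (real s + 1))" using assms(2) by simp
  also have "\<dots> = log 2 2 + L" unfolding L_def by (subst log_mult) (auto simp del: of_nat_add)
  also have "\<dots> = 1 + L" by simp
  finally have "A \<le> real (s + 2) * (1 + L)"
    using A(2) mult_left_mono[of "log 2 d" "1 + L" "real (s + 2)"] by linarith
  moreover have "L \<le> log 2 A" using A(1) unfolding L_def by simp
  ultimately have "A / (2 * log 2 A) \<le> real (s + 2) * (1 + L) / (2 * L)"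
    using \<open>2 < L\<close> A(1) by (intro frac_le) auto
  also have "\<dots> < real s + 1"
  proof -
    have "real s * 2 < real s * L" using \<open>2 < L\<close> assms(1) by simp
    moreover have "real (s + 2) * (1 + L) = real s + 2 + real s * L + 2 * L"
      "(real s + 1) * (2 * L) = 2 * (real s * L) + 2 * L"
      by (simp_all add: algebra_simps)
    ultimately have "real (s + 2) * (1 + L) < (real s + 1) * (2 * L)" using assms(1) by linarith
    then show ?thesis using \<open>2 < L\<close> by (simp add: divide_less_eq)
  qed
  finally show ?thesis unfolding A_def .
qed

lemma alt_size_lower: "d ^ j \<le> alt_size d j"
proof (induction j)
  case (Suc j)
  have "d ^ Suc j = d * d ^ j" by simp
  also have "\<dots> \<le> d * alt_size d j" using Suc by (rule mult_le_mono2)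
  also have "\<dots> \<le> alt_size d (Suc j)" by simp
  finally show ?case .
qed simp

lemma alt_size_upper: "2 \<le> d \<Longrightarrow> alt_size d j < d ^ Suc j"
proof (induction j)
  case (Suc j)
  have "1 + d * alt_size d j < d * (alt_size d j + 1)" using Suc.prems by simp
  also have "\<dots> \<le> d * d ^ Suc j" using Suc by (intro mult_le_mono2) simp
  finally show ?case by simp
qed simp

lemma directed_tree_src_tree: "directed_tree {0..<alt_size d D} (src_tree d D 0)"
proof -
  define E where "E = src_tree d D 0"
  have to_root: "(v, 0) \<in> (E \<union> E\<inverse>)\<^sup>*" if "v < alt_size d D" for v
    using alt_tree_connected[of d D] that unfolding E_def by auto
  have connected: "(u, v) \<in> (E \<union> E\<inverse>)\<^sup>*" if "u < alt_size d D" "v < alt_size d D" for u v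
  proof -
    have "(0, v) \<in> ((E \<union> E\<inverse>)\<inverse>)\<^sup>*" using rtrancl_converseI[OF to_root[OF that(2)]] .
    then have "(0, v) \<in> (E \<union> E\<inverse>)\<^sup>*" by (simp add: converse_Un Un_commute)
    then show ?thesis using to_root[OF that(1)] by (rule rtrancl_trans[rotated])
  qed
  have "card E = alt_size d D - 1" using alt_tree_card unfolding E_def by blast
  moreover have "E \<subseteq> {0..<alt_size d D} \<times> {0..<alt_size d D}"
    using src_tree_edge_range[of _ _ d D 0] unfolding E_def by fastforce
  moreover have "\<forall>(u,v)\<in>E. u \<noteq> v \<and> (v,u) \<notin> E"
    unfolding E_def by (auto dest!: src_tree_edge_range)
  ultimately show ?thesis
    using alt_size_pos[of d D] connected unfolding directed_tree_def E_def by simp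
qed

lemma src_tree_upward_span:
  assumes "k < D" "2 * k + 1 \<le> d"
  shows "k < upward_span {0..<alt_size d D} (src_tree d D 0)"
proof (rule branching_upward_span)
  have "\<forall>(a,b)\<in>src_tree d D 0. a < b" using src_tree_edge_range by blast
  then show "\<exists>x y c. upward_planar_layered_drawing {0..<alt_size d D} (src_tree d D 0) x y c"
    using non_crossing_parabola_drawing alt_tree_non_crossing by blast
  show "all_paths_short (src_tree d D 0)" using alt_tree_short by blast
  show "finite (src_tree d D 0)" using alt_tree_card by blast
  show "branching (src_tree d D 0) d D 0 (alt_size d D)"
    using alt_tree_branching[of d D] by simp
  show "\<forall>c\<in>neighbours (src_tree d D 0) 0 - {alt_size d D}. (0,c) \<in> src_tree d D 0"
    unfolding neighbours_def using alt_tree_short[of d D] by auto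
qed (use assms in simp_all)

lemma large_tree_with_large_span:
  fixes m :: nat
  obtains n and V :: "nat set" and E where "m \<le> n" "0 < n" "directed_tree V E" "card V = n"
    "all_paths_short E" "log 2 (real n) / (2 * log 2 (log 2 (real n))) < real (upward_span V E)"
proof -
  define s where "s = max 4 m"
  define d where "d = 2 * s + 1"
  define n where "n = alt_size d (s + 1)"
  have "4 \<le> s" unfolding s_def by simp
  have "d ^ (s + 1) \<le> n" unfolding n_def by (rule alt_size_lower)
  moreover have "n < d ^ Suc (s + 1)" unfolding n_def d_def by (rule alt_size_upper) (use \<open>4 \<le> s\<close> in simp)
  ultimately have "log 2 n / (2 * log 2 (log 2 n)) < real s + 1"
    using log_ratio_bound[OF \<open>4 \<le> s\<close> d_def] by simp
  moreover have "s < upward_span {0..<n} (src_tree d (s + 1) 0)"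
    unfolding n_def d_def by (rule src_tree_upward_span) auto
  moreover have "m \<le> n" "0 < n"
  proof -
    have "d \<le> n" using \<open>d ^ (s + 1) \<le> n\<close> self_le_power[of d "s + 1"] by (simp add: d_def)
    moreover have "m < d" unfolding d_def s_def by simp
    ultimately show "m \<le> n" "0 < n" by linarith+
  qed
  moreover have "directed_tree {0..<n} (src_tree d (s + 1) 0)" "all_paths_short (src_tree d (s + 1) 0)"
    unfolding n_def using directed_tree_src_tree alt_tree_short by blast+
  ultimately show thesis using that[of n "{0..<n}" "src_tree d (s + 1) 0"] by simp
qed

theorem mainTheorem4:
  shows "infinite {n::nat. n > 0 \<and>
           (\<exists>(V::nat set) E. directed_tree V E \<and> card V = n \<and> all_paths_short E \<and>
              real (upward_span V E) > log 2 (real n) / (2 * log 2 (log 2 (real n))))}"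
  unfolding infinite_nat_iff_unbounded_le
  by (metis (mono_tags, lifting) large_tree_with_large_span mem_Collect_eq)

end
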